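(* Suppose $\kappa$ is a cardinal such that $\mathfrak{s}(\mathbb{R})\leq\kappa=\mathrm{cof}(\kappa^{\aleph_0},\subseteq)$. Then $\mathfrak{z}\leq\kappa$.
   Context: All spaces are infinite Hausdorff topological spaces. For infinite sets $U, A$, say $U$ splits $A$ if both $A\cap U$ and $A\setminus U$ are infinite. $\mathfrak{s}(\mathbb{R})$ is the smallest cardinality of a family $\mathcal{U}$ of open subsets of $\mathbb{R}$ (usual topology) such that every infinite $A\subseteq\mathbb{R}$ is split by some $U\in\mathcal{U}$. A space is non-sequential if it is not discrete and contains no non-trivial convergent sequence; $\mathfrak{z}$ is the smallest weight of a compact non-sequential space. $\mathrm{cof}(\kappa^{\aleph_0},\subseteq)$ is the smallest cardinality of a family $\mathcal{C}$ of countable subsets of $\kappa$ such that every countable subset of $\kappa$ is contained in some member of $\mathcal{C}$. *)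

theory Defs
  imports "HOL-Analysis.Analysis" "HOL-Library.Equipollence"
begin

definition splits :: "'a set \<Rightarrow> 'a set \<Rightarrow> bool" where
  "splits U A \<longleftrightarrow> infinite (A \<inter> U) \<and> infinite (A - U)"

definition real_splitting_family :: "real set set \<Rightarrow> bool" where
  "real_splitting_family \<U> \<longleftrightarrow>
     (\<forall>U\<in>\<U>. open U) \<and> (\<forall>A. infinite A \<longrightarrow> (\<exists>U\<in>\<U>. splits U A))"

definition sR_le :: "'a set \<Rightarrow> bool" where
  "sR_le K \<longleftrightarrow> (\<exists>\<U>. real_splitting_family \<U> \<and> \<U> \<lesssim> K)"

definition countable_cofinal :: "'a set \<Rightarrow> 'a set set \<Rightarrow> bool" where
  "countable_cofinal K \<C> \<longleftrightarrow>
     (\<forall>C\<in>\<C>. C \<subseteq> K \<and> countable C) \<and>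
     (\<forall>A. A \<subseteq> K \<and> countable A \<longrightarrow> (\<exists>C\<in>\<C>. A \<subseteq> C))"

definition cof_countable_eq :: "'a set \<Rightarrow> bool" where
  "cof_countable_eq K \<longleftrightarrow>
     (\<exists>\<C>. countable_cofinal K \<C> \<and> \<C> \<lesssim> K) \<and>
     (\<forall>\<C>. countable_cofinal K \<C> \<longrightarrow> K \<lesssim> \<C>)"

definition base_of :: "'a topology \<Rightarrow> 'a set set \<Rightarrow> bool" where
  "base_of X \<B> \<longleftrightarrow> (\<forall>V\<in>\<B>. openin X V) \<and>
     (\<forall>U x. openin X U \<and> x \<in> U \<longrightarrow> (\<exists>V\<in>\<B>. x \<in> V \<and> V \<subseteq> U))"

definition discrete_space :: "'a topology \<Rightarrow> bool" where
  "discrete_space X \<longleftrightarrow> (\<forall>S. S \<subseteq> topspace X \<longrightarrow> openin X S)"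

definition has_nontrivial_convergent_seq :: "'a topology \<Rightarrow> bool" where
  "has_nontrivial_convergent_seq X \<longleftrightarrow>
     (\<exists>f l. range f \<subseteq> topspace X \<and> inj f \<and> limitin X f l sequentially)"

definition non_sequential :: "'a topology \<Rightarrow> bool" where
  "non_sequential X \<longleftrightarrow> \<not> discrete_space X \<and> \<not> has_nontrivial_convergent_seq X"

text \<open>Points are taken in a type of cardinality 2^|'a| \<ge> 2^|K|,
  which is enough since a T0 space of weight w has at most 2^w points.\<close>
definition z_le :: "'a set \<Rightarrow> bool" where
  "z_le K \<longleftrightarrow> (\<exists>X :: 'a set topology.
      infinite (topspace X) \<and> Hausdorff_space X \<and> compact_space X \<and> non_sequential X \<and>
      (\<exists>\<B>. base_of X \<B> \<and> \<B> \<lesssim> K))"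

end

(*
  The space is a closed subspace of the Cantor cube 2^I over I = omega1 x K, hence compact
  Hausdorff with a base of size |K|. Fix a splitting family of open sets and a cofinal family
  in [K]^omega, both of size at most |K|, and let every k in K code a triple (C, U, V) of a
  cofinal set and two splitting sets. Coordinate (a, k) reads its countably many parents (b, c),
  with b < a and c in C, as a point q of Cantor space. Whenever the ternary Cantor map sends q
  into U, the coordinate is forced to record whether the depth of q in the open set of such
  points (the length of the shortest prefix of q whose cylinder lies in that set) belongs to V.
  Points are built by recursion on the ordinal coordinate, at least one for every k in K.

  An injective sequence converging in this space is separated by countably many coordinates,
  and these are all parents of some (a, k) for every k with first component C. Splitting the
  images of the sequence in the reals by some U leaves infinitely many terms in the preimage of
  U while their limit lies outside it, so their depths are unbounded; splitting the depths by
  some V then makes coordinate (a, k), for k coding (C, U, V), take both values infinitely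
  often, which contradicts convergence. The inequality |K| <= cof([K]^omega) is only needed to
  rule out countable K.
*)

theory Submission
  imports Defs "HOL-Library.Countable_Set_Type" "HOL-Algebra.Free_Abelian_Groups"
begin

section \<open>Countable ordinals\<close>

definition omega1 :: "nat set set" where
  "omega1 = Field (cardSuc natLeq)"

definition omega1_less :: "nat set \<Rightarrow> nat set \<Rightarrow> bool" where
  "omega1_less a b \<longleftrightarrow> (a, b) \<in> cardSuc natLeq \<and> a \<noteq> b"

lemma well_order_omega1: "well_order_on omega1 (cardSuc natLeq)"
  unfolding omega1_def by (simp add: cardSuc_Well_order natLeq_Card_order)

lemma wf_omega1_less: "wf {(a, b). omega1_less a b}"
proof -
  have "wf (cardSuc natLeq - Id)"
    using well_order_omega1 unfolding well_order_on_def by blast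
  moreover have "{(a, b). omega1_less a b} = cardSuc natLeq - Id"
    by (auto simp: omega1_less_def)
  ultimately show ?thesis by simp
qed

lemma omega1_less_in_omega1: "omega1_less a b \<Longrightarrow> a \<in> omega1 \<and> b \<in> omega1"
  by (auto simp: omega1_less_def omega1_def Field_def)

lemma countable_omega1_less: "a \<in> omega1 \<Longrightarrow> countable {b. omega1_less b a}"
proof -
  assume a: "a \<in> omega1"
  have "card_of (underS (cardSuc natLeq) a) <o cardSuc natLeq"
    using card_of_underS[OF cardSuc_Card_order[OF natLeq_Card_order]] a by (simp add: omega1_def)
  hence "card_of (underS (cardSuc natLeq) a) \<le>o natLeq"
    using cardSuc_ordLeq_ordLess[OF natLeq_Card_order card_of_Card_order] by blast
  moreover have "underS (cardSuc natLeq) a = {b. omega1_less b a}"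
    by (auto simp: underS_def omega1_less_def)
  ultimately show ?thesis by (simp add: countable_card_le_natLeq)
qed

lemma uncountable_omega1: "\<not> countable omega1"
proof
  assume "countable omega1"
  hence "card_of omega1 \<le>o natLeq" by (simp add: countable_card_le_natLeq)
  moreover have "card_of omega1 =o cardSuc natLeq"
    unfolding omega1_def by (rule card_of_Field_ordIso[OF cardSuc_Card_order[OF natLeq_Card_order]])
  ultimately have "cardSuc natLeq \<le>o natLeq" using ordIso_ordLeq_trans ordIso_symmetric by blast
  thus False using cardSuc_greater[OF natLeq_Card_order] not_ordLeq_ordLess by blast
qed

lemma countable_omega1_bounded:
  assumes "countable B" "B \<subseteq> omega1"
  shows "\<exists>a\<in>omega1. \<forall>b\<in>B. omega1_less b a"
proof -
  have "countable (\<Union>b\<in>B. insert b {c. omega1_less c b})"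
    using assms countable_omega1_less by blast
  hence "\<not> omega1 \<subseteq> (\<Union>b\<in>B. insert b {c. omega1_less c b})"
    using uncountable_omega1 countable_subset by blast
  then obtain a where a: "a \<in> omega1" "a \<notin> (\<Union>b\<in>B. insert b {c. omega1_less c b})"
    by blast
  have "omega1_less b a" if b: "b \<in> B" for b
  proof -
    have "a \<noteq> b" "\<not> omega1_less a b" using a(2) b by auto
    moreover have "total_on omega1 (cardSuc natLeq)"
      using well_order_omega1 unfolding well_order_on_def linear_order_on_def by blast
    ultimately show ?thesis
      using a(1) assms(2) b unfolding total_on_def omega1_less_def by blast
  qed
  thus ?thesis using a(1) by blast
qed

lemma omega1_least: "\<exists>a\<in>omega1. \<forall>b. \<not> omega1_less b a"
proof -
  obtain x where "x \<in> omega1" using uncountable_omega1 by fastforce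
  then obtain a where "a \<in> omega1" "\<forall>b. (b, a) \<in> {(a, b). omega1_less a b} \<longrightarrow> b \<notin> omega1"
    using wfE_min[OF wf_omega1_less] by metis
  thus ?thesis using omega1_less_in_omega1 by blast
qed

lemma omega1_lepoll_uncountable: "\<not> countable K \<Longrightarrow> omega1 \<lesssim> K"
proof -
  assume "\<not> countable K"
  hence "\<not> card_of K \<le>o natLeq" by (simp add: countable_card_le_natLeq)
  hence "natLeq <o card_of K"
    using not_ordLeq_iff_ordLess natLeq_Well_order card_of_Well_order by blast
  hence "cardSuc natLeq \<le>o card_of K" using cardSuc_least[OF natLeq_Card_order card_of_Card_order] by blast
  hence "card_of omega1 \<le>o card_of K"
    unfolding omega1_def
    using card_of_Field_ordIso[OF cardSuc_Card_order[OF natLeq_Card_order]] ordIso_ordLeq_trans by blast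
  thus ?thesis by (simp add: lepoll_def card_of_ordLeq[symmetric])
qed

section \<open>The Cantor map and cylinder depth\<close>

text \<open>Ternary expansions with digits 0 and 2, so that the map is injective.\<close>

definition cantor_digit :: "(nat \<Rightarrow> bool) \<Rightarrow> nat \<Rightarrow> real" where
  "cantor_digit z i = (if z i then 2 / 3 ^ Suc i else 0)"

definition cantor_map :: "(nat \<Rightarrow> bool) \<Rightarrow> real" where
  "cantor_map z = suminf (cantor_digit z)"

definition agree_upto :: "nat \<Rightarrow> (nat \<Rightarrow> 'b) \<Rightarrow> (nat \<Rightarrow> 'b) \<Rightarrow> bool" where
  "agree_upto m z z' \<longleftrightarrow> (\<forall>j<m. z j = z' j)"

lemma sums_cantor_tail: "(\<lambda>n. 2 / 3 ^ Suc (n + k) :: real) sums (1 / 3 ^ k)"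
proof -
  have "(\<lambda>n. (2 / 3 ^ Suc k) * (1 / 3 :: real) ^ n) sums ((2 / 3 ^ Suc k) * (1 / (1 - 1 / 3)))"
    by (intro sums_mult geometric_sums) simp
  thus ?thesis by (simp add: power_add power_one_over field_simps)
qed

lemma summable_cantor_digit: "summable (cantor_digit z)"
proof (rule summable_comparison_test')
  show "summable (\<lambda>i. 2 / 3 ^ Suc i :: real)"
    using sums_cantor_tail[of 0] by (simp add: sums_iff)
  show "norm (cantor_digit z i) \<le> 2 / 3 ^ Suc i" for i
    by (simp add: cantor_digit_def)
qed

lemma cantor_tail_bound:
  "\<bar>suminf (\<lambda>n. cantor_digit z (n + k) - cantor_digit z' (n + k))\<bar> \<le> 1 / 3 ^ k"
proof -
  have "norm (suminf (\<lambda>n. cantor_digit z (n + k) - cantor_digit z' (n + k)))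
        \<le> suminf (\<lambda>n. 2 / 3 ^ Suc (n + k) :: real)"
  proof (rule norm_suminf_le)
    show "norm (cantor_digit z (n + k) - cantor_digit z' (n + k)) \<le> 2 / 3 ^ Suc (n + k)" for n
      by (simp add: cantor_digit_def)
    show "summable (\<lambda>n. 2 / 3 ^ Suc (n + k) :: real)"
      using sums_cantor_tail by (rule sums_summable)
  qed
  thus ?thesis using sums_unique[OF sums_cantor_tail] by simp
qed

lemma cantor_map_diff:
  assumes "agree_upto m z z'"
  shows "cantor_map z - cantor_map z' = suminf (\<lambda>n. cantor_digit z (n + m) - cantor_digit z' (n + m))"
proof -
  have summable: "summable (\<lambda>i. cantor_digit z i - cantor_digit z' i)"
    using summable_cantor_digit by (rule summable_diff) (rule summable_cantor_digit)
  have "(\<Sum>i<m. cantor_digit z i - cantor_digit z' i) = 0"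
    using assms by (simp add: agree_upto_def cantor_digit_def)
  thus ?thesis
    using suminf_split_initial_segment[OF summable, of m] summable_cantor_digit
    by (simp add: cantor_map_def suminf_diff)
qed

lemma cantor_map_close: "agree_upto m z z' \<Longrightarrow> \<bar>cantor_map z - cantor_map z'\<bar> \<le> 1 / 3 ^ m"
  using cantor_map_diff cantor_tail_bound by metis

lemma inj_cantor_map: "inj cantor_map"
proof (rule injI, rule ccontr)
  fix z z' assume eq: "cantor_map z = cantor_map z'" and "z \<noteq> z'"
  then obtain i where "z i \<noteq> z' i" by auto
  define m where "m = (LEAST i. z i \<noteq> z' i)"
  have differ: "z m \<noteq> z' m" unfolding m_def by (rule LeastI) fact
  have "agree_upto m z z'" unfolding agree_upto_def m_def using not_less_Least by blast
  hence "0 = suminf (\<lambda>n. cantor_digit z (n + m) - cantor_digit z' (n + m))"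
    using cantor_map_diff[of m z z'] eq by simp
  also have "\<dots> = suminf (\<lambda>n. cantor_digit z (n + Suc m) - cantor_digit z' (n + Suc m))
                  + (cantor_digit z m - cantor_digit z' m)"
    using suminf_split_head[OF summable_ignore_initial_segment[OF summable_diff[OF
          summable_cantor_digit summable_cantor_digit]], of z m z'] by simp
  finally have "\<bar>cantor_digit z m - cantor_digit z' m\<bar> \<le> 1 / 3 ^ Suc m"
    using cantor_tail_bound[of z "Suc m" z'] by linarith
  moreover have "\<bar>cantor_digit z m - cantor_digit z' m\<bar> = 2 / 3 ^ Suc m"
    using differ by (cases "z m") (auto simp: cantor_digit_def)
  ultimately show False by (simp add: field_simps)
qed

definition cylinder_open :: "(nat \<Rightarrow> 'b) set \<Rightarrow> bool" where
  "cylinder_open G \<longleftrightarrow> (\<forall>z\<in>G. \<exists>m. \<forall>z'. agree_upto m z z' \<longrightarrow> z' \<in> G)"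

definition cylinder_depth :: "(nat \<Rightarrow> 'b) set \<Rightarrow> (nat \<Rightarrow> 'b) \<Rightarrow> nat" where
  "cylinder_depth G z = (LEAST m. \<forall>z'. agree_upto m z z' \<longrightarrow> z' \<in> G)"

lemma cylinder_depth_subset:
  assumes "cylinder_open G" "z \<in> G" "agree_upto (cylinder_depth G z) z z'"
  shows "z' \<in> G"
proof -
  obtain m where "\<forall>z'. agree_upto m z z' \<longrightarrow> z' \<in> G"
    using assms(1,2) unfolding cylinder_open_def by blast
  hence "\<forall>z'. agree_upto (cylinder_depth G z) z z' \<longrightarrow> z' \<in> G"
    unfolding cylinder_depth_def by (rule LeastI)
  thus ?thesis using assms(3) by blast
qed

lemma cylinder_depth_locally_constant:
  assumes G: "cylinder_open G" and z: "z \<in> G" and agree: "agree_upto (cylinder_depth G z) z z'"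
  shows "cylinder_depth G z' = cylinder_depth G z"
proof -
  have z': "z' \<in> G" using cylinder_depth_subset[OF G z agree] .
  have same: "agree_upto k z w \<longleftrightarrow> agree_upto k z' w" if "k \<le> cylinder_depth G z" for k w
    using agree that unfolding agree_upto_def by auto
  show ?thesis
  proof (rule antisym)
    show "cylinder_depth G z' \<le> cylinder_depth G z"
      unfolding cylinder_depth_def[of G z']
    proof (rule Least_le, intro allI impI)
      fix w assume "agree_upto (cylinder_depth G z) z' w"
      thus "w \<in> G" using same[OF order_refl] cylinder_depth_subset[OF G z] by blast
    qed
    show "cylinder_depth G z \<le> cylinder_depth G z'"
    proof (rule ccontr)
      assume contra: "\<not> ?thesis"
      hence le: "cylinder_depth G z' \<le> cylinder_depth G z" by simp
      have "cylinder_depth G z \<le> cylinder_depth G z'"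
        unfolding cylinder_depth_def[of G z]
      proof (rule Least_le, intro allI impI)
        fix w assume "agree_upto (cylinder_depth G z') z w"
        thus "w \<in> G" using same[OF le] cylinder_depth_subset[OF G z'] by blast
      qed
      thus False using contra by simp
    qed
  qed
qed

lemma eventually_agree_upto:
  assumes "\<forall>j. eventually (\<lambda>n. q n j = q0 j) sequentially"
  shows "eventually (\<lambda>n. agree_upto m (q n) q0) sequentially"
proof -
  have "eventually (\<lambda>n. \<forall>j\<in>{..<m}. q n j = q0 j) sequentially"
    using assms by (intro eventually_ball_finite) auto
  thus ?thesis unfolding agree_upto_def by (rule eventually_mono) simp
qed

lemma cylinder_open_eventually:
  assumes "cylinder_open G" "q0 \<in> G" "\<forall>j. eventually (\<lambda>n. q n j = q0 j) sequentially"
  shows "eventually (\<lambda>n. q n \<in> G) sequentially"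
proof -
  obtain m where m: "\<forall>z'. agree_upto m q0 z' \<longrightarrow> z' \<in> G"
    using assms(1,2) unfolding cylinder_open_def by blast
  show ?thesis
    using eventually_agree_upto[OF assms(3), of m]
    by (rule eventually_mono) (use m in \<open>simp add: agree_upto_def\<close>)
qed

lemma cylinder_depth_eventually_large:
  assumes G: "cylinder_open G" and "q0 \<notin> G" "\<forall>j. eventually (\<lambda>n. q n j = q0 j) sequentially"
  shows "eventually (\<lambda>n. q n \<in> G \<longrightarrow> m < cylinder_depth G (q n)) sequentially"
  using eventually_agree_upto[OF assms(3), of m]
proof (rule eventually_mono, intro impI)
  fix n assume agree: "agree_upto m (q n) q0" and qn: "q n \<in> G"
  show "m < cylinder_depth G (q n)"
  proof (rule ccontr)
    assume "\<not> m < cylinder_depth G (q n)"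
    hence "agree_upto (cylinder_depth G (q n)) (q n) q0"
      using agree by (simp add: agree_upto_def)
    hence "q0 \<in> G" using cylinder_depth_subset[OF G qn] by blast
    thus False using \<open>q0 \<notin> G\<close> by simp
  qed
qed

lemma infinite_cylinder_depths:
  assumes G: "cylinder_open G" and "q0 \<notin> G" "\<forall>j. eventually (\<lambda>n. q n j = q0 j) sequentially"
    and "infinite {n. q n \<in> G}"
  shows "infinite ((\<lambda>n. cylinder_depth G (q n)) ` {n. q n \<in> G})"
proof
  assume "finite ((\<lambda>n. cylinder_depth G (q n)) ` {n. q n \<in> G})"
  then obtain M where M: "\<And>n. q n \<in> G \<Longrightarrow> cylinder_depth G (q n) \<le> M"
    using finite_nat_set_iff_bounded_le by auto
  have "eventually (\<lambda>n. q n \<notin> G) sequentially"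
    using cylinder_depth_eventually_large[OF assms(1-3), of M]
    by (rule eventually_mono) (use M not_le in blast)
  hence "finite {n. q n \<in> G}"
    by (simp add: cofinite_eq_sequentially[symmetric] eventually_cofinite)
  thus False using assms(4) by contradiction
qed

lemma cylinder_open_vimage_cantor_map:
  assumes "open U"
  shows "cylinder_open (cantor_map -` U)"
  unfolding cylinder_open_def
proof
  fix z assume "z \<in> cantor_map -` U"
  then obtain e where e: "e > 0" "ball (cantor_map z) e \<subseteq> U"
    using assms open_contains_ball by blast
  obtain m where m: "(1 / 3) ^ m < e" using real_arch_pow_inv[OF e(1), of "1 / 3"] by auto
  have "cantor_map z' \<in> U" if "agree_upto m z z'" for z'
  proof -
    have "\<bar>cantor_map z - cantor_map z'\<bar> < e"
      using cantor_map_close[OF that] m by (simp add: power_one_over)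
    thus ?thesis using e(2) by (auto simp: dist_real_def)
  qed
  thus "\<exists>m. \<forall>z'. agree_upto m z z' \<longrightarrow> z' \<in> cantor_map -` U" by blast
qed

lemma splits_image:
  assumes "splits U (f ` A)"
  shows "infinite {a \<in> A. f a \<in> U}" "infinite {a \<in> A. f a \<notin> U}"
proof -
  have "f ` A \<inter> U \<subseteq> f ` {a \<in> A. f a \<in> U}" "f ` A - U \<subseteq> f ` {a \<in> A. f a \<notin> U}"
    by auto
  thus "infinite {a \<in> A. f a \<in> U}" "infinite {a \<in> A. f a \<notin> U}"
    using assms unfolding splits_def by (meson finite_imageI finite_subset)+
qed

lemma splitting_family_splits_cylinder_depths:
  assumes \<U>: "real_splitting_family \<U>" and "inj q"
    and conv: "\<forall>j. eventually (\<lambda>n. q n j = q0 j) sequentially"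
  obtains U V where "U \<in> \<U>" "V \<in> \<U>"
    "infinite {n. q n \<in> cantor_map -` U \<and> real (cylinder_depth (cantor_map -` U) (q n)) \<in> V}"
    "infinite {n. q n \<in> cantor_map -` U \<and> real (cylinder_depth (cantor_map -` U) (q n)) \<notin> V}"
proof -
  have "infinite (range (cantor_map \<circ> q))"
    using \<open>inj q\<close> inj_cantor_map by (intro range_inj_infinite inj_compose)
  then obtain U where U: "U \<in> \<U>" "splits U ((cantor_map \<circ> q) ` UNIV)"
    using \<U> unfolding real_splitting_family_def by blast
  define G where "G = cantor_map -` U"
  have G: "cylinder_open G"
    using U(1) \<U> cylinder_open_vimage_cantor_map unfolding G_def real_splitting_family_def by blast
  have in_G: "infinite {n. q n \<in> G}" and not_in_G: "infinite {n. q n \<notin> G}"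
    using splits_image[OF U(2)] by (simp_all add: G_def)
  have "q0 \<notin> G"
  proof
    assume "q0 \<in> G"
    hence "finite {n. q n \<notin> G}"
      using cylinder_open_eventually[OF G _ conv]
      by (simp add: cofinite_eq_sequentially[symmetric] eventually_cofinite)
    thus False using not_in_G by contradiction
  qed
  hence "infinite ((\<lambda>n. cylinder_depth G (q n)) ` {n. q n \<in> G})"
    using infinite_cylinder_depths[OF G _ conv in_G] by blast
  hence "infinite (real ` (\<lambda>n. cylinder_depth G (q n)) ` {n. q n \<in> G})"
    by (simp add: finite_image_iff)
  moreover have "real ` (\<lambda>n. cylinder_depth G (q n)) ` {n. q n \<in> G}
                 = (\<lambda>n. real (cylinder_depth G (q n))) ` {n. q n \<in> G}"
    by auto
  ultimately have "infinite ((\<lambda>n. real (cylinder_depth G (q n))) ` {n. q n \<in> G})"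
    by simp
  then obtain V where "V \<in> \<U>" "splits V ((\<lambda>n. real (cylinder_depth G (q n))) ` {n. q n \<in> G})"
    using \<U> unfolding real_splitting_family_def by blast
  with splits_image[of V _ "{n. q n \<in> G}"] show thesis
    using that[OF U(1)] unfolding G_def by simp
qed

section \<open>Cardinal arithmetic\<close>

lemma times_lepoll_infinite:
  assumes "infinite K" "A \<lesssim> K" "B \<lesssim> K"
  shows "A \<times> B \<lesssim> K"
proof -
  have "A \<times> B \<lesssim> K \<times> K" using assms(2,3) by (rule times_lepoll_mono)
  moreover have "ordIso2 (card_of (K \<times> K)) (card_of K)"
    using card_of_Times_same_infinite[OF assms(1)] .
  hence "K \<times> K \<lesssim> K" unfolding eqpoll_iff_card_of_ordIso[symmetric] by (rule eqpoll_imp_lepoll)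
  ultimately show ?thesis by (rule lepoll_trans)
qed

lemma Fpow_lepoll_infinite:
  assumes "infinite K" "A \<lesssim> K"
  shows "Fpow A \<lesssim> K"
proof (cases "finite A")
  case True
  hence "finite (Fpow A)" by (intro finite_subset[OF Fpow_subset_Pow]) simp
  thus ?thesis by (rule finite_lepoll_infinite[OF assms(1)])
next
  case False
  show ?thesis using eqpoll_Fpow[OF False] assms(2) by (rule lepoll_trans1)
qed

lemma lepoll_imp_onto:
  assumes "A \<lesssim> B" "A \<noteq> {}"
  shows "\<exists>f. f \<in> B \<rightarrow> A \<and> A \<subseteq> f ` B"
proof -
  obtain g where g: "A \<subseteq> g ` B" using assms(1) unfolding lepoll_iff by blast
  obtain a where a: "a \<in> A" using assms(2) by blast
  define f where "f b = (if g b \<in> A then g b else a)" for b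
  have "f \<in> B \<rightarrow> A" using a by (simp add: f_def)
  moreover have "A \<subseteq> f ` B"
  proof
    fix x assume "x \<in> A"
    then obtain b where "b \<in> B" "x = g b" using g by blast
    thus "x \<in> f ` B" using \<open>x \<in> A\<close> by (auto simp: f_def)
  qed
  ultimately show ?thesis by blast
qed

section \<open>Cantor cubes\<close>

definition cantor_cube :: "'i set \<Rightarrow> ('i \<Rightarrow> bool) topology" where
  "cantor_cube I = product_topology (\<lambda>_. discrete_topology UNIV) I"

lemma topspace_cantor_cube [simp]: "topspace (cantor_cube I) = (\<Pi>\<^sub>E i\<in>I. UNIV)"
  by (simp add: cantor_cube_def)

lemma compact_space_cantor_cube: "compact_space (cantor_cube I)"
  by (simp add: cantor_cube_def compact_space_product_topology compact_space_discrete_topology)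

lemma Hausdorff_space_cantor_cube: "Hausdorff_space (cantor_cube I)"
  by (simp add: cantor_cube_def Hausdorff_space_product_topology)

lemma openin_cantor_cubeE:
  assumes S: "openin (cantor_cube I) S" and "x \<in> S"
  obtains F where "finite F" "F \<subseteq> I" "{y \<in> topspace (cantor_cube I). \<forall>j\<in>F. y j = x j} \<subseteq> S"
proof -
  obtain U where "finite {i \<in> I. U i \<noteq> topspace (discrete_topology UNIV)}"
    and x: "x \<in> Pi\<^sub>E I U" and U: "Pi\<^sub>E I U \<subseteq> S"
    using S \<open>x \<in> S\<close> unfolding cantor_cube_def openin_product_topology_alt by blast
  hence fin: "finite {i \<in> I. U i \<noteq> UNIV}" by simp
  have "{y \<in> topspace (cantor_cube I). \<forall>j\<in>{i \<in> I. U i \<noteq> UNIV}. y j = x j} \<subseteq> Pi\<^sub>E I U"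
  proof
    fix y assume y: "y \<in> {y \<in> topspace (cantor_cube I). \<forall>j\<in>{i \<in> I. U i \<noteq> UNIV}. y j = x j}"
    have "y i \<in> U i" if "i \<in> I" for i
    proof (cases "U i = UNIV")
      case False
      hence "y i = x i" using y that by blast
      thus ?thesis using x that by (simp add: PiE_iff)
    qed simp
    moreover have "y \<in> extensional I" using y by (simp add: PiE_iff)
    ultimately show "y \<in> Pi\<^sub>E I U" by (simp add: PiE_iff)
  qed
  hence "{y \<in> topspace (cantor_cube I). \<forall>j\<in>{i \<in> I. U i \<noteq> UNIV}. y j = x j} \<subseteq> S"
    using U by (rule subset_trans)
  moreover have "{i \<in> I. U i \<noteq> UNIV} \<subseteq> I" by blast
  ultimately show thesis using fin that by blast
qed

lemma openin_cantor_cubeI: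
  assumes S_sub: "S \<subseteq> topspace (cantor_cube I)"
    and cyl: "\<And>x. x \<in> S \<Longrightarrow>
      \<exists>F. finite F \<and> F \<subseteq> I \<and> {y \<in> topspace (cantor_cube I). \<forall>j\<in>F. y j = x j} \<subseteq> S"
  shows "openin (cantor_cube I) S"
  unfolding cantor_cube_def openin_product_topology_alt
proof
  fix x assume x: "x \<in> S"
  obtain F where F: "finite F" "F \<subseteq> I" "{y \<in> topspace (cantor_cube I). \<forall>j\<in>F. y j = x j} \<subseteq> S"
    using cyl[OF x] by (elim exE conjE)
  define U where "U j = (if j \<in> F then {x j} else UNIV)" for j
  have "{i \<in> I. U i \<noteq> topspace (discrete_topology UNIV)} \<subseteq> F" by (auto simp: U_def)
  hence "finite {i \<in> I. U i \<noteq> topspace (discrete_topology UNIV)}" using F(1) by (rule finite_subset)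
  moreover have "x \<in> extensional I" using subsetD[OF S_sub x] by (simp add: PiE_iff)
  hence "x \<in> Pi\<^sub>E I U" by (simp add: U_def PiE_iff)
  moreover have "Pi\<^sub>E I U \<subseteq> {y \<in> topspace (cantor_cube I). \<forall>j\<in>F. y j = x j}"
  proof
    fix y assume y: "y \<in> Pi\<^sub>E I U"
    have "y j = x j" if "j \<in> F" for j
    proof -
      have "y j \<in> U j" using PiE_mem[OF y] F(2) that by blast
      thus ?thesis using that by (simp add: U_def)
    qed
    moreover have "y \<in> extensional I" using y by (simp add: PiE_iff)
    ultimately show "y \<in> {y \<in> topspace (cantor_cube I). \<forall>j\<in>F. y j = x j}" by (simp add: PiE_iff)
  qed
  hence "Pi\<^sub>E I U \<subseteq> S" using F(3) by (rule subset_trans)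
  moreover have "\<forall>i\<in>I. openin (discrete_topology UNIV) (U i)" by simp
  ultimately show "\<exists>U. finite {i \<in> I. U i \<noteq> topspace (discrete_topology UNIV)} \<and>
      (\<forall>i\<in>I. openin (discrete_topology UNIV) (U i)) \<and> x \<in> Pi\<^sub>E I U \<and> Pi\<^sub>E I U \<subseteq> S"
    by (intro exI[of _ U] conjI) assumption+
qed

lemma limitin_cantor_cube_coordinate:
  assumes "limitin (cantor_cube I) f l sequentially" "i \<in> I"
  shows "eventually (\<lambda>n. f n i = l i) sequentially"
proof -
  have "limitin (discrete_topology UNIV) (\<lambda>n. f n i) (l i) sequentially"
    using assms unfolding cantor_cube_def limitin_componentwise by blast
  hence "\<forall>U. openin (discrete_topology UNIV) U \<and> l i \<in> U \<longrightarrow> eventually (\<lambda>n. f n i \<in> U) sequentially"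
    by (simp add: limitin_def)
  from this[rule_format, of "{l i}"] show ?thesis by simp
qed

lemma openin_cantor_cube_cylinder:
  assumes "finite L" "fst ` L \<subseteq> I"
  shows "openin (cantor_cube I) {x \<in> topspace (cantor_cube I). \<forall>(j, b)\<in>L. x j = b}"
    (is "openin _ ?W")
proof (rule openin_cantor_cubeI)
  show "?W \<subseteq> topspace (cantor_cube I)" by blast
  fix x assume x: "x \<in> ?W"
  have "{y \<in> topspace (cantor_cube I). \<forall>j\<in>fst ` L. y j = x j} \<subseteq> ?W"
  proof
    fix y assume y: "y \<in> {y \<in> topspace (cantor_cube I). \<forall>j\<in>fst ` L. y j = x j}"
    have "y j = b" if "(j, b) \<in> L" for j b
    proof -
      have "y j = x j" using bspec[OF conjunct2[OF CollectD[OF y]] imageI[OF that, of fst]] by simp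
      also have "x j = b" using x that by auto
      finally show ?thesis .
    qed
    thus "y \<in> ?W" using y by auto
  qed
  thus "\<exists>F. finite F \<and> F \<subseteq> I \<and> {y \<in> topspace (cantor_cube I). \<forall>j\<in>F. y j = x j} \<subseteq> ?W"
    using assms by blast
qed

lemma base_of_cantor_cube_cylinders:
  assumes X: "X \<subseteq> topspace (cantor_cube I)"
  shows "base_of (subtopology (cantor_cube I) X)
           ((\<lambda>L. {x \<in> X. \<forall>(j, b)\<in>L. x j = b}) ` Fpow (I \<times> UNIV))"
  unfolding base_of_def
proof (intro conjI ballI allI impI)
  fix V assume "V \<in> (\<lambda>L. {x \<in> X. \<forall>(j, b)\<in>L. x j = b}) ` Fpow (I \<times> UNIV)"
  then obtain L where L: "finite L" "L \<subseteq> I \<times> UNIV" "V = {x \<in> X. \<forall>(j, b)\<in>L. x j = b}"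
    unfolding Fpow_def by blast
  have "openin (cantor_cube I) {x \<in> topspace (cantor_cube I). \<forall>(j, b)\<in>L. x j = b}"
    using L(1,2) by (intro openin_cantor_cube_cylinder) auto
  hence "openin (subtopology (cantor_cube I) X)
           ({x \<in> topspace (cantor_cube I). \<forall>(j, b)\<in>L. x j = b} \<inter> X)"
    by (rule openin_subtopology_Int)
  moreover have "V = {x \<in> topspace (cantor_cube I). \<forall>(j, b)\<in>L. x j = b} \<inter> X"
    unfolding L(3) using X by auto
  ultimately show "openin (subtopology (cantor_cube I) X) V" by simp
next
  fix U x assume "openin (subtopology (cantor_cube I) X) U \<and> x \<in> U"
  then obtain W where W: "openin (cantor_cube I) W" "U = W \<inter> X" and x: "x \<in> W" "x \<in> X"
    unfolding openin_subtopology by blast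
  obtain F where F: "finite F" "F \<subseteq> I"
    "{y \<in> topspace (cantor_cube I). \<forall>j\<in>F. y j = x j} \<subseteq> W"
    using W(1) x(1) by (rule openin_cantor_cubeE)
  define L where "L = (\<lambda>j. (j, x j)) ` F"
  have "{y \<in> X. \<forall>(j, b)\<in>L. y j = b} \<in> (\<lambda>L. {x \<in> X. \<forall>(j, b)\<in>L. x j = b}) ` Fpow (I \<times> UNIV)"
    using F(1,2) by (intro imageI) (auto simp: L_def Fpow_def)
  moreover have "x \<in> {y \<in> X. \<forall>(j, b)\<in>L. y j = b}" using x(2) by (auto simp: L_def)
  moreover have "{y \<in> X. \<forall>(j, b)\<in>L. y j = b} \<subseteq> U"
  proof
    fix y assume y: "y \<in> {y \<in> X. \<forall>(j, b)\<in>L. y j = b}"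
    hence "y \<in> X" "\<forall>j\<in>F. y j = x j" by (auto simp: L_def)
    hence "y \<in> {y \<in> topspace (cantor_cube I). \<forall>j\<in>F. y j = x j}" using X by blast
    thus "y \<in> U" using F(3) W(2) \<open>y \<in> X\<close> by blast
  qed
  ultimately show "\<exists>V\<in>(\<lambda>L. {x \<in> X. \<forall>(j, b)\<in>L. x j = b}) ` Fpow (I \<times> UNIV). x \<in> V \<and> V \<subseteq> U"
    by (intro bexI[of _ "{y \<in> X. \<forall>(j, b)\<in>L. y j = b}"] conjI)
qed

lemma cantor_cube_lepoll_Pow:
  assumes "I \<lesssim> K"
  shows "topspace (cantor_cube I) \<lesssim> Pow K"
proof -
  obtain h where h: "inj_on h I" "h ` I \<subseteq> K" using assms unfolding lepoll_def by blast
  have "inj_on (\<lambda>x. h ` {i \<in> I. x i}) (topspace (cantor_cube I))"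
  proof (rule inj_onI)
    fix x y assume x: "x \<in> topspace (cantor_cube I)" and y: "y \<in> topspace (cantor_cube I)"
      and eq: "h ` {i \<in> I. x i} = h ` {i \<in> I. y i}"
    have "x i = y i" if "i \<in> I" for i
    proof -
      have "x i \<longleftrightarrow> h i \<in> h ` {i \<in> I. x i}" "y i \<longleftrightarrow> h i \<in> h ` {i \<in> I. y i}"
        using h(1) that by (auto simp: inj_on_def)
      thus ?thesis using eq by simp
    qed
    thus "x = y" using x y by (intro PiE_ext[of _ I "\<lambda>_. UNIV"]) simp_all
  qed
  moreover have "(\<lambda>x. h ` {i \<in> I. x i}) ` topspace (cantor_cube I) \<subseteq> Pow K" using h(2) by blast
  ultimately show ?thesis unfolding lepoll_def by blast
qed

section \<open>Homeomorphic copies\<close>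

lemma homeomorphic_copy:
  fixes X :: "'b topology"
  assumes "topspace X \<lesssim> (UNIV :: 'c set)"
  obtains Y :: "'c topology" and \<phi> where "homeomorphic_map X Y \<phi>"
proof -
  obtain \<phi> :: "'b \<Rightarrow> 'c" where inj: "inj_on \<phi> (topspace X)"
    using assms unfolding lepoll_def by blast
  define \<psi> where "\<psi> = inv_into (topspace X) \<phi>"
  have \<psi>\<phi>: "\<psi> (\<phi> x) = x" if "x \<in> topspace X" for x
    using inj that by (simp add: \<psi>_def)
  define Y where "Y = pullback_topology (\<phi> ` topspace X) \<psi> X"
  have topY: "topspace Y = \<phi> ` topspace X"
    using \<psi>\<phi> by (auto simp: Y_def topspace_pullback_topology)
  have "continuous_map Y X \<psi>"
    using continuous_map_pullback[OF continuous_map_id] unfolding Y_def by simp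
  moreover have "continuous_map X X (\<psi> \<circ> \<phi>)"
    by (rule continuous_map_eq[OF continuous_map_id]) (simp add: \<psi>\<phi>)
  hence "continuous_map X Y \<phi>" unfolding Y_def by (rule continuous_map_pullback') auto
  ultimately have "homeomorphic_maps X Y \<phi> \<psi>"
    using \<psi>\<phi> topY by (auto simp: homeomorphic_maps_def)
  thus thesis using that[of Y \<phi>] homeomorphic_map_maps by blast
qed

lemma homeomorphic_map_base_of:
  assumes hom: "homeomorphic_map X Y \<phi>" and B: "base_of X \<B>"
  shows "base_of Y ((`) \<phi> ` \<B>)"
  unfolding base_of_def
proof (intro conjI ballI allI impI)
  fix W assume "W \<in> (`) \<phi> ` \<B>"
  then obtain V where "V \<in> \<B>" "W = \<phi> ` V" by blast
  thus "openin Y W"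
    using B homeomorphic_imp_open_map[OF hom] unfolding base_of_def open_map_def by blast
next
  fix U y assume Uy: "openin Y U \<and> y \<in> U"
  then obtain x where x: "x \<in> topspace X" "y = \<phi> x"
    using homeomorphic_imp_surjective_map[OF hom] openin_subset by blast
  have "openin X {x \<in> topspace X. \<phi> x \<in> U}"
    using homeomorphic_imp_continuous_map[OF hom] Uy by (simp add: continuous_map_def)
  then obtain V where "V \<in> \<B>" "x \<in> V" "V \<subseteq> {x \<in> topspace X. \<phi> x \<in> U}"
    using B x Uy unfolding base_of_def by blast
  thus "\<exists>W\<in>(`) \<phi> ` \<B>. y \<in> W \<and> W \<subseteq> U" using x(2) by blast
qed

lemma homeomorphic_map_nontrivial_convergent_seq:
  assumes hom: "homeomorphic_map X Y \<phi>" and "has_nontrivial_convergent_seq X"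
  shows "has_nontrivial_convergent_seq Y"
proof -
  obtain f l where f: "range f \<subseteq> topspace X" "inj f" and lim: "limitin X f l sequentially"
    using assms(2) unfolding has_nontrivial_convergent_seq_def by blast
  have "range (\<phi> \<circ> f) \<subseteq> topspace Y"
    using f(1) homeomorphic_imp_surjective_map[OF hom] by auto
  moreover have "inj (\<phi> \<circ> f)"
    using f homeomorphic_imp_injective_map[OF hom] by (simp add: inj_on_def subset_eq)
  moreover have "limitin Y (\<phi> \<circ> f) (\<phi> l) sequentially"
    using continuous_map_limit[OF homeomorphic_imp_continuous_map[OF hom] lim] .
  ultimately show ?thesis unfolding has_nontrivial_convergent_seq_def by blast
qed

lemma compact_infinite_not_discrete:
  assumes "compact_space X" "infinite (topspace X)"
  shows "\<not> discrete_space X"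
proof
  assume "discrete_space X"
  hence "discrete_topology (topspace X) = X"
    unfolding discrete_topology_unique discrete_space_def by auto
  hence "compact_space (discrete_topology (topspace X))" using assms(1) by simp
  thus False using assms(2) by (simp add: compact_space_discrete_topology)
qed

lemma z_leI:
  fixes X :: "'b topology" and K :: "'a set"
  assumes "infinite (topspace X)" "Hausdorff_space X" "compact_space X"
    "\<not> has_nontrivial_convergent_seq X" "base_of X \<B>" "\<B> \<lesssim> K"
    "topspace X \<lesssim> (UNIV :: 'a set set)"
  shows "z_le K"
proof -
  obtain Y :: "'a set topology" and \<phi> where hom: "homeomorphic_map X Y \<phi>"
    using homeomorphic_copy[OF assms(7)] by blast
  have homeo: "X homeomorphic_space Y" using hom homeomorphic_space by blast
  obtain \<psi> where "homeomorphic_maps X Y \<phi> \<psi>" using hom homeomorphic_map_maps by blast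
  hence "homeomorphic_map Y X \<psi>" by (simp add: homeomorphic_maps_map)
  hence no_seq: "\<not> has_nontrivial_convergent_seq Y"
    using assms(4) homeomorphic_map_nontrivial_convergent_seq by blast
  have "infinite (topspace Y)"
    using assms(1) homeomorphic_imp_surjective_map[OF hom] homeomorphic_imp_injective_map[OF hom]
    by (metis finite_imageD)
  moreover have "compact_space Y" using assms(3) homeomorphic_compact_space[OF homeo] by blast
  moreover have "Hausdorff_space Y" using assms(2) homeomorphic_Hausdorff_space[OF homeo] by blast
  moreover have "base_of Y ((`) \<phi> ` \<B>)" using hom assms(5) by (rule homeomorphic_map_base_of)
  moreover have "(`) \<phi> ` \<B> \<lesssim> K" using image_lepoll assms(6) by (rule lepoll_trans)
  ultimately show ?thesis
    unfolding z_le_def non_sequential_def using no_seq compact_infinite_not_discrete by blast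
qed

lemma infinite_unsplit_subset:
  assumes "infinite A"
  obtains B where "B \<subseteq> A" "infinite B" "\<not> splits U B"
proof (cases "infinite (A \<inter> U)")
  case True
  moreover have "\<not> splits U (A \<inter> U)" by (simp add: splits_def Int_Diff)
  ultimately show thesis by (intro that[of "A \<inter> U"]) auto
next
  case False
  hence "infinite (A - U)" using assms by (metis Int_Diff_Un finite_UnI)
  moreover have "(A - U) \<inter> U = {}" by blast
  hence "\<not> splits U (A - U)" unfolding splits_def by (subst \<open>(A - U) \<inter> U = {}\<close>) simp
  ultimately show thesis by (intro that[of "A - U"]) auto
qed

lemma sR_le_cof_imp_uncountable:
  assumes "sR_le K" "cof_countable_eq K"
  shows "\<not> countable K"
proof
  assume "countable K"
  hence "countable_cofinal K {K}" by (simp add: countable_cofinal_def)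
  hence K: "K \<lesssim> {K}" using assms(2) unfolding cof_countable_eq_def by blast
  obtain \<U> where \<U>: "real_splitting_family \<U>" "\<U> \<lesssim> K"
    using assms(1) unfolding sR_le_def by blast
  have "\<U> \<lesssim> {K}" using \<U>(2) K by (rule lepoll_trans)
  hence "\<U> \<lesssim> {()}" using singleton_eqpoll by (rule lepoll_trans2)
  then obtain U where "\<U> \<subseteq> {U}" unfolding subset_singleton_iff_lepoll[symmetric] by blast
  obtain B :: "real set" where "infinite B" "\<not> splits U B"
    using infinite_unsplit_subset[OF infinite_UNIV_char_0] by blast
  thus False using \<U>(1) \<open>\<U> \<subseteq> {U}\<close> unfolding real_splitting_family_def by blast
qed

section \<open>The construction\<close>

definition lower_block :: "nat set \<Rightarrow> 'a set \<Rightarrow> (nat set \<times> 'a) set" where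
  "lower_block a C = {p. omega1_less (fst p) a \<and> snd p \<in> C}"

lemma lower_block_subset: "lower_block a C \<subseteq> omega1 \<times> C"
  using omega1_less_in_omega1 by (auto simp: lower_block_def)

lemma countable_lower_block:
  assumes "a \<in> omega1" "countable C"
  shows "countable (lower_block a C)"
proof -
  have "countable ({b. omega1_less b a} \<times> C)"
    using countable_omega1_less[OF assms(1)] assms(2) by (rule countable_SIGMA)
  moreover have "lower_block a C \<subseteq> {b. omega1_less b a} \<times> C" by (auto simp: lower_block_def)
  ultimately show ?thesis by (rule countable_subset[rotated])
qed

locale splitting_construction =
  fixes K :: "'a set" and \<C> :: "'a set set" and \<U> :: "real set set"
    and code :: "'a \<Rightarrow> 'a set \<times> real set \<times> real set"
  assumes uncountable_K: "\<not> countable K"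
    and cofinal: "countable_cofinal K \<C>"
    and splitting: "real_splitting_family \<U>"
    and code_in: "code \<in> K \<rightarrow> \<C> \<times> \<U> \<times> \<U>"
    and code_onto: "\<C> \<times> \<U> \<times> \<U> \<subseteq> code ` K"
begin

definition index :: "(nat set \<times> 'a) set" where
  "index = omega1 \<times> K"

definition parents :: "nat set \<times> 'a \<Rightarrow> (nat set \<times> 'a) set" where
  "parents i = lower_block (fst i) (fst (code (snd i)))"

definition parent_seq :: "nat set \<times> 'a \<Rightarrow> nat \<Rightarrow> nat set \<times> 'a" where
  "parent_seq i = from_nat_into (parents i)"

definition trigger :: "nat set \<times> 'a \<Rightarrow> (nat \<Rightarrow> bool) set" where
  "trigger i = cantor_map -` fst (snd (code (snd i)))"

definition forced :: "nat set \<times> 'a \<Rightarrow> (nat \<Rightarrow> bool) \<Rightarrow> bool" where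
  "forced i q \<longleftrightarrow> real (cylinder_depth (trigger i) q) \<in> snd (snd (code (snd i)))"

definition admissible :: "(nat set \<times> 'a \<Rightarrow> bool) \<Rightarrow> nat set \<times> 'a \<Rightarrow> bool" where
  "admissible x i \<longleftrightarrow>
     parents i = {} \<or> (x \<circ> parent_seq i \<in> trigger i \<longrightarrow> x i = forced i (x \<circ> parent_seq i))"

definition admissible_points :: "(nat set \<times> 'a \<Rightarrow> bool) set" where
  "admissible_points = {x \<in> topspace (cantor_cube index). \<forall>i\<in>index. admissible x i}"

definition admissible_space :: "(nat set \<times> 'a \<Rightarrow> bool) topology" where
  "admissible_space = subtopology (cantor_cube index) admissible_points"

lemma topspace_admissible_space: "topspace admissible_space = admissible_points"
  unfolding admissible_space_def admissible_points_def by (rule topspace_subtopology_subset) blast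

lemma code_components:
  assumes "k \<in> K"
  shows "fst (code k) \<subseteq> K" "open (fst (snd (code k)))"
  using funcset_mem[OF code_in assms] cofinal splitting
  by (auto simp: countable_cofinal_def real_splitting_family_def mem_Times_iff)

lemma parents_subset_index:
  assumes "i \<in> index"
  shows "parents i \<subseteq> index"
proof -
  have "snd i \<in> K" using assms by (auto simp: index_def)
  hence "fst (code (snd i)) \<subseteq> K" by (rule code_components)
  thus ?thesis using lower_block_subset unfolding parents_def index_def by blast
qed

lemma lower_block_enumeration:
  assumes "a \<in> omega1" "C \<in> \<C>" "lower_block a C \<noteq> {}"
  shows "range (from_nat_into (lower_block a C)) = lower_block a C" "lower_block a C \<subseteq> index"
proof -
  have "C \<subseteq> K" "countable C" using assms(2) cofinal by (auto simp: countable_cofinal_def)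
  thus "range (from_nat_into (lower_block a C)) = lower_block a C"
    using countable_lower_block[OF assms(1) \<open>countable C\<close>] assms(3) by simp
  show "lower_block a C \<subseteq> index"
    using lower_block_subset \<open>C \<subseteq> K\<close> unfolding index_def by blast
qed

lemma parent_seq_in_index:
  assumes "i \<in> index" "parents i \<noteq> {}"
  shows "parent_seq i n \<in> index"
  using from_nat_into[OF assms(2)] parents_subset_index[OF assms(1)]
  unfolding parent_seq_def by blast

lemma forced_locally_constant:
  assumes i: "i \<in> index" and q: "q \<in> trigger i"
    and agree: "agree_upto (cylinder_depth (trigger i) q) q q'"
  shows "q' \<in> trigger i \<and> forced i q' = forced i q"
proof -
  have "open (fst (snd (code (snd i))))"
    using i code_components(2) by (auto simp: index_def)
  hence "cylinder_open (trigger i)" unfolding trigger_def by (rule cylinder_open_vimage_cantor_map)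
  thus ?thesis
    using cylinder_depth_subset cylinder_depth_locally_constant q agree by (metis forced_def)
qed

lemma closedin_admissible_points: "closedin (cantor_cube index) admissible_points"
  unfolding closedin_def
proof
  show "admissible_points \<subseteq> topspace (cantor_cube index)" by (auto simp: admissible_points_def)
  show "openin (cantor_cube index) (topspace (cantor_cube index) - admissible_points)"
  proof (rule openin_cantor_cubeI)
    fix x assume x: "x \<in> topspace (cantor_cube index) - admissible_points"
    then obtain i where i: "i \<in> index" "\<not> admissible x i" by (auto simp: admissible_points_def)
    hence ne: "parents i \<noteq> {}" and q: "x \<circ> parent_seq i \<in> trigger i"
      and differ: "x i \<noteq> forced i (x \<circ> parent_seq i)"
      by (auto simp: admissible_def)
    define F where "F = insert i (parent_seq i ` {..<cylinder_depth (trigger i) (x \<circ> parent_seq i)})"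
    have "finite F" "F \<subseteq> index" using i(1) parent_seq_in_index[OF i(1) ne] by (auto simp: F_def)
    moreover have "y \<in> topspace (cantor_cube index) - admissible_points"
      if y: "y \<in> topspace (cantor_cube index)" "\<forall>j\<in>F. y j = x j" for y
    proof -
      have "agree_upto (cylinder_depth (trigger i) (x \<circ> parent_seq i)) (x \<circ> parent_seq i) (y \<circ> parent_seq i)"
        using y(2) by (auto simp: agree_upto_def F_def)
      from forced_locally_constant[OF i(1) q this]
      have "\<not> admissible y i" using differ y(2) ne by (auto simp: admissible_def F_def)
      thus ?thesis using y(1) i(1) by (auto simp: admissible_points_def)
    qed
    ultimately show "\<exists>F. finite F \<and> F \<subseteq> index \<and>
        {y \<in> topspace (cantor_cube index). \<forall>j\<in>F. y j = x j} \<subseteq> topspace (cantor_cube index) - admissible_points"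
      by blast
  qed blast
qed

lemma compact_space_admissible_space: "compact_space admissible_space"
  unfolding admissible_space_def
  by (intro compact_space_subtopology closedin_compact_space compact_space_cantor_cube closedin_admissible_points)

lemma Hausdorff_space_admissible_space: "Hausdorff_space admissible_space"
  unfolding admissible_space_def by (intro Hausdorff_space_subtopology Hausdorff_space_cantor_cube)

text \<open>
  Recursion on the ordinal component, which is smaller for parents. Parentless coordinates are
  unconstrained, and \<open>seed_rec k\<close> marks \<open>k\<close> there.
\<close>

definition seed_rec :: "'a \<Rightarrow> nat set \<times> 'a \<Rightarrow> bool" where
  "seed_rec k = wfrec (inv_image {(a, b). omega1_less a b} fst)
     (\<lambda>g i. if parents i = {} then snd i = k else forced i (g \<circ> parent_seq i))"

lemma seed_rec_eq:
  "seed_rec k i = (if parents i = {} then snd i = k else forced i (seed_rec k \<circ> parent_seq i))"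
proof -
  let ?R = "inv_image {(a, b). omega1_less a b} fst"
  have "seed_rec k i = (if parents i = {} then snd i = k
                        else forced i (cut (seed_rec k) ?R i \<circ> parent_seq i))"
    unfolding seed_rec_def by (subst wfrec) (simp_all add: wf_inv_image wf_omega1_less)
  moreover have "cut (seed_rec k) ?R i \<circ> parent_seq i = seed_rec k \<circ> parent_seq i"
    if "parents i \<noteq> {}"
  proof
    fix n
    have "parent_seq i n \<in> parents i" unfolding parent_seq_def using that by (rule from_nat_into)
    hence "(parent_seq i n, i) \<in> ?R" by (simp add: parents_def lower_block_def)
    thus "(cut (seed_rec k) ?R i \<circ> parent_seq i) n = (seed_rec k \<circ> parent_seq i) n"
      by (simp add: cut_apply)
  qed
  ultimately show ?thesis by simp
qed

definition seed_point :: "'a \<Rightarrow> nat set \<times> 'a \<Rightarrow> bool" where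
  "seed_point k = restrict (seed_rec k) index"

lemma seed_point_in_admissible_points: "seed_point k \<in> admissible_points"
  unfolding admissible_points_def
proof (intro CollectI conjI ballI)
  show "seed_point k \<in> topspace (cantor_cube index)" by (simp add: seed_point_def)
  fix i assume i: "i \<in> index"
  show "admissible (seed_point k) i"
  proof (cases "parents i = {}")
    case False
    have "seed_point k \<circ> parent_seq i = seed_rec k \<circ> parent_seq i"
      using parent_seq_in_index[OF i False] by (auto simp: seed_point_def)
    thus ?thesis using i False seed_rec_eq[of k i] by (simp add: admissible_def seed_point_def)
  qed (simp add: admissible_def)
qed

lemma inj_on_seed_point: "inj_on seed_point K"
proof (rule inj_onI)
  fix k k' assume k: "k \<in> K" "k' \<in> K" and eq: "seed_point k = seed_point k'"
  obtain a where a: "a \<in> omega1" "\<forall>b. \<not> omega1_less b a" using omega1_least by blast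
  have i: "(a, k) \<in> index" and root: "parents (a, k) = {}"
    using a k by (auto simp: index_def parents_def lower_block_def)
  have "seed_point k (a, k) \<longleftrightarrow> k = k" "seed_point k' (a, k) \<longleftrightarrow> k = k'"
    using i root seed_rec_eq[of _ "(a, k)"] by (simp_all add: seed_point_def)
  thus "k = k'" using eq by simp
qed

lemma infinite_admissible_points: "infinite admissible_points"
proof
  assume "finite admissible_points"
  moreover have "seed_point ` K \<subseteq> admissible_points" using seed_point_in_admissible_points by blast
  ultimately have "finite (seed_point ` K)" by (simp add: finite_subset)
  hence "finite K" using inj_on_seed_point by (simp add: finite_image_iff)
  thus False using uncountable_K countable_finite by blast
qed

lemma separating_level:
  fixes f :: "nat \<Rightarrow> nat set \<times> 'a \<Rightarrow> bool"
  assumes f: "range f \<subseteq> topspace (cantor_cube index)" "inj f"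
  obtains a C where "a \<in> omega1" "C \<in> \<C>"
    "\<And>n m. n \<noteq> m \<Longrightarrow> \<exists>j\<in>lower_block a C. f n j \<noteq> f m j"
proof -
  have "\<exists>j. fst p \<noteq> snd p \<longrightarrow> j \<in> index \<and> f (fst p) j \<noteq> f (snd p) j" for p :: "nat \<times> nat"
  proof (rule ccontr)
    assume "\<not> ?thesis"
    hence "f (fst p) = f (snd p)" "fst p \<noteq> snd p"
      using f(1) by (auto intro!: PiE_ext[of _ index "\<lambda>_. UNIV"])
    thus False using f(2) by (simp add: inj_eq)
  qed
  then obtain sep where sep: "\<And>p. fst p \<noteq> snd p \<Longrightarrow> sep p \<in> index \<and> f (fst p) (sep p) \<noteq> f (snd p) (sep p)"
    by metis
  define A where "A = sep ` {p. fst p \<noteq> snd p}"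
  have "countable A" "A \<subseteq> index" using sep by (auto simp: A_def)
  hence "countable (fst ` A)" "fst ` A \<subseteq> omega1" "countable (snd ` A)" "snd ` A \<subseteq> K"
    by (auto simp: index_def)
  then obtain a C where a: "a \<in> omega1" "\<forall>b\<in>fst ` A. omega1_less b a"
    and C: "C \<in> \<C>" "snd ` A \<subseteq> C"
    using countable_omega1_bounded cofinal unfolding countable_cofinal_def by meson
  show thesis
  proof (rule that[OF a(1) C(1)])
    fix n m :: nat assume "n \<noteq> m"
    hence "sep (n, m) \<in> A" "f n (sep (n, m)) \<noteq> f m (sep (n, m))"
      using sep[of "(n, m)"] by (auto simp: A_def)
    moreover from this(1) have "sep (n, m) \<in> lower_block a C"
      using a(2) C(2) by (auto simp: lower_block_def)
    ultimately show "\<exists>j\<in>lower_block a C. f n j \<noteq> f m j" by blast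
  qed
qed

lemma index_with_code:
  assumes "a \<in> omega1" "C \<in> \<C>" "U \<in> \<U>" "V \<in> \<U>"
  obtains i where "i \<in> index" "parents i = lower_block a C"
    "trigger i = cantor_map -` U"
    "\<And>q. forced i q \<longleftrightarrow> real (cylinder_depth (cantor_map -` U) q) \<in> V"
proof -
  have "(C, U, V) \<in> code ` K" using assms by (intro subsetD[OF code_onto]) simp
  then obtain k where "k \<in> K" "code k = (C, U, V)" by (rule imageE) simp
  thus thesis using assms(1)
    by (intro that[of "(a, k)"]) (auto simp: index_def parents_def trigger_def forced_def)
qed

lemma oscillating_coordinate:
  fixes f :: "nat \<Rightarrow> nat set \<times> 'a \<Rightarrow> bool"
  assumes f: "range f \<subseteq> admissible_points" "inj f"
    and conv: "\<And>i. i \<in> index \<Longrightarrow> eventually (\<lambda>n. f n i = l i) sequentially"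
  obtains i where "i \<in> index" "infinite {n. f n i}" "infinite {n. \<not> f n i}"
proof -
  have range_f: "range f \<subseteq> topspace (cantor_cube index)" using f(1) by (auto simp: admissible_points_def)
  obtain a C where a: "a \<in> omega1" and C: "C \<in> \<C>"
    and sep: "\<And>n m. n \<noteq> m \<Longrightarrow> \<exists>j\<in>lower_block a C. f n j \<noteq> f m j"
    using separating_level[OF range_f f(2)] by blast
  define e where "e = from_nat_into (lower_block a C)"
  have ne: "lower_block a C \<noteq> {}" using sep[of 0 1] by auto
  have range_e: "range e = lower_block a C" and e_index: "\<And>t. e t \<in> index"
    using lower_block_enumeration[OF a C ne] unfolding e_def by blast+
  define q where "q n = f n \<circ> e" for n
  have "inj q"
  proof (rule injI, rule ccontr)
    fix n m assume eq: "q n = q m" and "n \<noteq> m"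
    then obtain j where "j \<in> lower_block a C" "f n j \<noteq> f m j" using sep by blast
    moreover from this(1) obtain t where "j = e t" using range_e by blast
    ultimately have "q n t \<noteq> q m t" by (simp add: q_def)
    thus False using eq by simp
  qed
  moreover have "\<forall>t. eventually (\<lambda>n. q n t = (l \<circ> e) t) sequentially"
    using conv e_index by (simp add: q_def)
  ultimately obtain U V where UV: "U \<in> \<U>" "V \<in> \<U>"
    "infinite {n. q n \<in> cantor_map -` U \<and> real (cylinder_depth (cantor_map -` U) (q n)) \<in> V}"
    "infinite {n. q n \<in> cantor_map -` U \<and> real (cylinder_depth (cantor_map -` U) (q n)) \<notin> V}"
    by (rule splitting_family_splits_cylinder_depths[OF splitting])
  obtain i where i: "i \<in> index" "parents i = lower_block a C" "trigger i = cantor_map -` U"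
    "\<And>z. forced i z \<longleftrightarrow> real (cylinder_depth (cantor_map -` U) z) \<in> V"
    using index_with_code[OF a C UV(1,2)] by blast
  have "f n i \<longleftrightarrow> real (cylinder_depth (cantor_map -` U) (q n)) \<in> V"
    if "q n \<in> cantor_map -` U" for n
  proof -
    have "admissible (f n) i" using f(1) i(1) unfolding admissible_points_def by blast
    moreover have "parent_seq i = e" by (simp add: parent_seq_def e_def i(2))
    ultimately show ?thesis using that i(2-4) ne by (simp add: admissible_def q_def)
  qed
  hence "{n. q n \<in> cantor_map -` U \<and> real (cylinder_depth (cantor_map -` U) (q n)) \<in> V} \<subseteq> {n. f n i}"
    "{n. q n \<in> cantor_map -` U \<and> real (cylinder_depth (cantor_map -` U) (q n)) \<notin> V} \<subseteq> {n. \<not> f n i}"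
    by auto
  hence "infinite {n. f n i}" "infinite {n. \<not> f n i}"
    using UV(3,4) by (auto dest: infinite_super)
  with i(1) show thesis by (rule that)
qed

lemma no_nontrivial_convergent_seq: "\<not> has_nontrivial_convergent_seq admissible_space"
proof
  assume "has_nontrivial_convergent_seq admissible_space"
  then obtain f l where f: "range f \<subseteq> admissible_points" "inj f" and lim: "limitin admissible_space f l sequentially"
    unfolding has_nontrivial_convergent_seq_def topspace_admissible_space by blast
  have "limitin (cantor_cube index) f l sequentially"
    using lim unfolding admissible_space_def limitin_subtopology by blast
  hence conv: "\<And>i. i \<in> index \<Longrightarrow> eventually (\<lambda>n. f n i = l i) sequentially"
    by (rule limitin_cantor_cube_coordinate)
  obtain i where i: "i \<in> index" "infinite {n. f n i}" "infinite {n. \<not> f n i}"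
    using oscillating_coordinate[OF f conv] .
  have "finite {n. f n i \<noteq> l i}"
    using conv[OF i(1)] by (simp add: cofinite_eq_sequentially[symmetric] eventually_cofinite)
  moreover have "{n. f n i} \<subseteq> {n. f n i \<noteq> l i} \<or> {n. \<not> f n i} \<subseteq> {n. f n i \<noteq> l i}"
    by (cases "l i") auto
  ultimately show False using i(2,3) finite_subset by blast
qed

lemma index_lepoll: "index \<lesssim> K"
  unfolding index_def
  using uncountable_K countable_finite omega1_lepoll_uncountable times_lepoll_infinite by blast

lemma admissible_space_base_lepoll: "\<exists>\<B>. base_of admissible_space \<B> \<and> \<B> \<lesssim> K"
proof (intro exI conjI)
  show "base_of admissible_space ((\<lambda>L. {x \<in> admissible_points. \<forall>(j, b)\<in>L. x j = b}) ` Fpow (index \<times> UNIV))"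
    unfolding admissible_space_def by (rule base_of_cantor_cube_cylinders) (auto simp: admissible_points_def)
  have "infinite K" using uncountable_K countable_finite by blast
  moreover have "(UNIV :: bool set) \<lesssim> K" using \<open>infinite K\<close> by (simp add: finite_lepoll_infinite)
  ultimately have "Fpow (index \<times> (UNIV :: bool set)) \<lesssim> K"
    using index_lepoll times_lepoll_infinite Fpow_lepoll_infinite by blast
  thus "(\<lambda>L. {x \<in> admissible_points. \<forall>(j, b)\<in>L. x j = b}) ` Fpow (index \<times> UNIV) \<lesssim> K"
    using image_lepoll lepoll_trans by blast
qed

lemma topspace_admissible_space_lepoll: "topspace admissible_space \<lesssim> Pow K"
proof -
  have "topspace admissible_space \<subseteq> topspace (cantor_cube index)"
    by (auto simp: topspace_admissible_space admissible_points_def)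
  thus ?thesis using cantor_cube_lepoll_Pow[OF index_lepoll] subset_imp_lepoll lepoll_trans by blast
qed

lemma z_le: "z_le K"
proof -
  obtain \<B> where \<B>: "base_of admissible_space \<B>" "\<B> \<lesssim> K"
    using admissible_space_base_lepoll by blast
  have "infinite (topspace admissible_space)"
    using infinite_admissible_points by (simp add: topspace_admissible_space)
  moreover have "topspace admissible_space \<lesssim> (UNIV :: 'a set set)"
    using topspace_admissible_space_lepoll subset_imp_lepoll[OF subset_UNIV] by (rule lepoll_trans)
  ultimately show ?thesis
    by (rule z_leI[OF _ Hausdorff_space_admissible_space compact_space_admissible_space
          no_nontrivial_convergent_seq \<B>])
qed

end

lemma splitting_construction_exists:
  fixes K :: "'a set"
  assumes "sR_le K" "cof_countable_eq K"
  obtains \<C> \<U> code where "splitting_construction K \<C> \<U> code"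
proof -
  have uncountable: "\<not> countable K" using sR_le_cof_imp_uncountable assms .
  hence "infinite K" using countable_finite by blast
  obtain \<U> where \<U>: "real_splitting_family \<U>" "\<U> \<lesssim> K"
    using assms(1) unfolding sR_le_def by blast
  obtain \<C> where \<C>: "countable_cofinal K \<C>" "\<C> \<lesssim> K"
    using assms(2) unfolding cof_countable_eq_def by blast
  have "\<C> \<times> \<U> \<times> \<U> \<lesssim> K"
    using \<open>infinite K\<close> \<C>(2) times_lepoll_infinite[OF \<open>infinite K\<close> \<U>(2) \<U>(2)]
    by (rule times_lepoll_infinite)
  moreover have "\<C> \<times> \<U> \<times> \<U> \<noteq> {}"
  proof -
    have "\<C> \<noteq> {}"
      using \<C>(1) unfolding countable_cofinal_def by (metis countable_empty empty_iff empty_subsetI)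
    moreover have "\<U> \<noteq> {}"
      using \<U>(1) infinite_UNIV_char_0 unfolding real_splitting_family_def by blast
    ultimately show ?thesis by simp
  qed
  ultimately obtain code where "code \<in> K \<rightarrow> \<C> \<times> \<U> \<times> \<U>" "\<C> \<times> \<U> \<times> \<U> \<subseteq> code ` K"
    using lepoll_imp_onto by blast
  hence "splitting_construction K \<C> \<U> code"
    using uncountable \<C>(1) \<U>(1) by unfold_locales
  thus thesis by (rule that)
qed

theorem theorem2p9:
  fixes K :: "'a set"
  assumes "sR_le K"
    and "cof_countable_eq K"
  shows "z_le K"
proof -
  obtain \<C> \<U> code where "splitting_construction K \<C> \<U> code"
    using splitting_construction_exists[OF assms] by blast
  then interpret splitting_construction K \<C> \<U> code .
  show ?thesis by (rule z_le)
qed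

end
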